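(* Let $m$ and $k$ be positive integers with $m > k$, and let $A \in \mathcal A_k$. Then the collection of numerical semigroups with multiplicity $m$ and type $(A; k)$ is exactly the collection of sets of the form (a disjoint union) \[ \Lambda = \{0\} \cup (m + A) \cup \bigl(2m + ((A + A)\cap[0, k])\bigr) \cup B \cup [2m + k + 1, \infty) \] where $B$ is any subset of $[m+k+1, 2m+k-1] \setminus (2m + A + A)$.
   Context: A numerical semigroup is a subset $\Lambda\subseteq\mathbb{N}_0$ closed under addition, containing $0$, with finite complement in $\mathbb{N}_0$. Its multiplicity $m$ is its smallest nonzero element and its Frobenius number $f$ is the largest element of $\mathbb{N}_0\setminus\Lambda$. For integers $a\le b$, $[a,b]=\{a,\dots,b\}$, and $[a,\infty)=\{a,a+1,\dots\}$. For $A\subseteq\mathbb{Z}$ and $b\in\mathbb{Z}$, $A+A=\{a_1+a_2:a_1,a_2\in A\}$ and $b+A=\{a+b:a\in A\}$. For a positive integer $k$, $\mathcal A_k = \{A \subseteq [0, k-1] : 0 \in A \text{ and } k \notin A + A\}$. A numerical semigroup $\Lambda$ with multiplicity $m$ and Frobenius number $f$ satisfying $2m<f<3m$ has type $(A;k)$, where $k<m$ is a positive integer and $A\in\mathcal A_k$, if $f=2m+k$ and $\Lambda\cap[m,m+k]=A+m$. *)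

theory Defs
  imports Main
begin

definition sumset :: "nat set \<Rightarrow> nat set \<Rightarrow> nat set" where
  "sumset A B = {a + b | a b. a \<in> A \<and> b \<in> B}"

definition numerical_semigroup :: "nat set \<Rightarrow> bool" where
  "numerical_semigroup S \<longleftrightarrow> 0 \<in> S \<and> (\<forall>x\<in>S. \<forall>y\<in>S. x + y \<in> S) \<and> finite (UNIV - S)"

definition multiplicity :: "nat set \<Rightarrow> nat" where
  "multiplicity S = (LEAST x. x \<in> S \<and> x \<noteq> 0)"

text \<open>Frobenius number: largest non-element (meaningful when the complement is nonempty).\<close>
definition frobenius :: "nat set \<Rightarrow> nat" where
  "frobenius S = Max (UNIV - S)"

definition A_family :: "nat \<Rightarrow> nat set set" where
  "A_family k = {A. A \<subseteq> {0..k-1} \<and> 0 \<in> A \<and> k \<notin> sumset A A}"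

definition has_type :: "nat set \<Rightarrow> nat set \<Rightarrow> nat \<Rightarrow> bool" where
  "has_type S A k \<longleftrightarrow>
     (let m = multiplicity S; f = frobenius S in
       UNIV - S \<noteq> {} \<and> 2*m < f \<and> f < 3*m \<and> 0 < k \<and> k < m \<and> A \<in> A_family k \<and>
       f = 2*m + k \<and> S \<inter> {m..m+k} = (\<lambda>a. a + m) ` A)"

end

theory Submission
  imports Defs
begin

text \<open>
  Elements of a semigroup of type \<open>(A; k)\<close> below its Frobenius number \<open>2m + k\<close> are \<open>0\<close>,
  the prescribed block \<open>m + A\<close> in \<open>[m, m + k]\<close>, and elements of \<open>[m + k + 1, 2m + k - 1]\<close>.
  Closure under addition forces \<open>2m + ((A + A) \<inter> [0, k])\<close> into the semigroup, and
  \<open>k \<notin> A + A\<close> keeps \<open>2m + k\<close> out of it; the rest of \<open>[m + k + 1, 2m + k - 1]\<close> is free,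
  because any sum of two nonzero elements, one of them at least \<open>m + k + 1\<close>, already
  exceeds \<open>2m + k\<close>.
\<close>

lemma mem_sumset: "x \<in> sumset A B \<longleftrightarrow> (\<exists>a\<in>A. \<exists>b\<in>B. x = a + b)"
  unfolding sumset_def by blast

lemma add_mem_sumset: "a \<in> A \<Longrightarrow> b \<in> B \<Longrightarrow> a + b \<in> sumset A B"
  unfolding sumset_def by blast

lemma frobenius_less_imp_mem:
  assumes "finite (UNIV - S)" and "frobenius S < x"
  shows "x \<in> S"
proof (rule ccontr)
  assume "x \<notin> S"
  then have "x \<le> frobenius S"
    unfolding frobenius_def using Max_ge[OF assms(1)] by blast
  with assms(2) show False by simp
qed

lemma frobenius_notin:
  assumes "finite (UNIV - S)" and "UNIV - S \<noteq> {}"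
  shows "frobenius S \<notin> S"
  using Max_in[OF assms] unfolding frobenius_def by blast

lemma frobenius_eqI:
  assumes "finite (UNIV - S)" and "f \<notin> S" and "\<And>x. f < x \<Longrightarrow> x \<in> S"
  shows "frobenius S = f"
  unfolding frobenius_def
proof (rule Max_eqI[OF assms(1)])
  show "y \<le> f" if "y \<in> UNIV - S" for y
    using that assms(3) not_le by blast
qed (use assms(2) in blast)

lemma less_multiplicity_notin:
  assumes "0 < x" and "x < multiplicity S"
  shows "x \<notin> S"
  using assms not_less_Least[of x "\<lambda>x. x \<in> S \<and> x \<noteq> 0"] unfolding multiplicity_def by auto

lemma multiplicity_eqI:
  assumes "m \<in> S" and "m \<noteq> 0" and "\<And>x. x \<in> S \<Longrightarrow> x \<noteq> 0 \<Longrightarrow> m \<le> x"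
  shows "multiplicity S = m"
  unfolding multiplicity_def using assms by (intro Least_equality) auto

definition type_semigroup :: "nat \<Rightarrow> nat \<Rightarrow> nat set \<Rightarrow> nat set \<Rightarrow> nat set" where
  "type_semigroup m k A B =
     {0} \<union> (\<lambda>a. a + m) ` A \<union> (\<lambda>x. x + 2*m) ` (sumset A A \<inter> {0..k}) \<union> B \<union> {2*m+k+1..}"

lemma mem_type_semigroup:
  "x \<in> type_semigroup m k A B \<longleftrightarrow>
     x = 0 \<or> (\<exists>a\<in>A. x = a + m) \<or> (\<exists>a\<in>A. \<exists>b\<in>A. a + b \<le> k \<and> x = a + b + 2*m) \<or>
     x \<in> B \<or> 2*m + k < x"
proof -
  have "x \<in> (\<lambda>y. y + 2*m) ` (sumset A A \<inter> {0..k}) \<longleftrightarrow>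
        (\<exists>a\<in>A. \<exists>b\<in>A. a + b \<le> k \<and> x = a + b + 2*m)"
    by (auto simp: image_iff mem_sumset; blast)
  then show ?thesis
    unfolding type_semigroup_def by auto
qed

lemma UNIV_Diff_type_semigroup_subset: "UNIV - type_semigroup m k A B \<subseteq> {..2*m+k}"
  by (auto simp: mem_type_semigroup)

lemma type_semigroup_nonzero_cases:
  assumes "x \<in> type_semigroup m k A B" and "x \<noteq> 0" and "k < m" and "B \<subseteq> {m+k+1..}"
  shows "(\<exists>a\<in>A. x = a + m) \<or> m + k < x"
  using assms unfolding mem_type_semigroup by auto

lemma type_semigroup_add_closed:
  assumes "k < m" and "B \<subseteq> {m+k+1..}"
    and x: "x \<in> type_semigroup m k A B" and y: "y \<in> type_semigroup m k A B"
  shows "x + y \<in> type_semigroup m k A B"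
proof (cases "x = 0 \<or> y = 0")
  case True
  then show ?thesis using x y by auto
next
  case False
  have ge_m: "m \<le> x" "m \<le> y"
    using False x y type_semigroup_nonzero_cases[OF _ _ assms(1,2)] by fastforce+
  show ?thesis
  proof (cases "(\<exists>a\<in>A. x = a + m) \<and> (\<exists>b\<in>A. y = b + m)")
    case True
    then obtain a b where "a \<in> A" "b \<in> A" "x + y = a + b + 2*m" by auto
    then show ?thesis
      unfolding mem_type_semigroup by (cases "a + b \<le> k") auto
  next
    case False
    then have "m + k < x \<or> m + k < y"
      using \<open>\<not> (x = 0 \<or> y = 0)\<close> x y type_semigroup_nonzero_cases[OF _ _ assms(1,2)] by blast
    then show ?thesis
      using ge_m unfolding mem_type_semigroup by auto
  qed
qed

lemma type_semigroup_numerical_semigroup: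
  assumes "k < m" and "B \<subseteq> {m+k+1..}"
  shows "numerical_semigroup (type_semigroup m k A B)"
proof -
  have "finite (UNIV - type_semigroup m k A B)"
    using UNIV_Diff_type_semigroup_subset by (rule finite_subset) simp
  moreover have "0 \<in> type_semigroup m k A B"
    by (simp add: mem_type_semigroup)
  ultimately show ?thesis
    unfolding numerical_semigroup_def using type_semigroup_add_closed[OF assms] by blast
qed

lemma multiplicity_type_semigroup:
  assumes "k < m" and "0 \<in> A" and "B \<subseteq> {m+k+1..}"
  shows "multiplicity (type_semigroup m k A B) = m"
proof (rule multiplicity_eqI)
  show "m \<in> type_semigroup m k A B"
    using assms(2) unfolding mem_type_semigroup by force
  show "m \<le> x" if "x \<in> type_semigroup m k A B" and "x \<noteq> 0" for x
    using type_semigroup_nonzero_cases[OF that assms(1,3)] by auto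
qed (use assms(1) in simp)

lemma type_semigroup_excludes_2m_plus_k:
  assumes "0 < k" and "A \<subseteq> {..<m+k}" and "k \<notin> sumset A A" and "2*m + k \<notin> B"
  shows "2*m + k \<notin> type_semigroup m k A B"
proof
  assume "2*m + k \<in> type_semigroup m k A B"
  then consider a where "a \<in> A" "2*m + k = a + m"
    | a b where "a \<in> A" "b \<in> A" "k = a + b"
    using assms(1,4) unfolding mem_type_semigroup by auto
  then show False
  proof cases
    case 1
    then show False using assms(2) by auto
  next
    case 2
    then show False using assms(3) add_mem_sumset by metis
  qed
qed

lemma frobenius_type_semigroup:
  assumes "2*m + k \<notin> type_semigroup m k A B"
  shows "frobenius (type_semigroup m k A B) = 2*m + k"
proof (rule frobenius_eqI[OF _ assms])
  show "finite (UNIV - type_semigroup m k A B)"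
    using UNIV_Diff_type_semigroup_subset by (rule finite_subset) simp
qed (simp add: mem_type_semigroup)

lemma type_semigroup_Int_interval:
  assumes "k < m" and "A \<subseteq> {..k}" and "B \<subseteq> {m+k+1..}"
  shows "type_semigroup m k A B \<inter> {m..m+k} = (\<lambda>a. a + m) ` A"
proof (intro equalityI subsetI)
  fix x assume x: "x \<in> type_semigroup m k A B \<inter> {m..m+k}"
  then have "x \<noteq> 0" using assms(1) by auto
  then have "(\<exists>a\<in>A. x = a + m) \<or> m + k < x"
    using x type_semigroup_nonzero_cases[OF _ _ assms(1,3)] by blast
  with x show "x \<in> (\<lambda>a. a + m) ` A" by auto
next
  fix x assume "x \<in> (\<lambda>a. a + m) ` A"
  then show "x \<in> type_semigroup m k A B \<inter> {m..m+k}"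
    using assms(2) by (auto simp: mem_type_semigroup)
qed

lemma type_semigroup_has_type:
  assumes "0 < k" and "k < m" and A: "A \<in> A_family k" and B: "B \<subseteq> {m+k+1..2*m+k-1}"
  shows "numerical_semigroup (type_semigroup m k A B)"
    and "multiplicity (type_semigroup m k A B) = m"
    and "has_type (type_semigroup m k A B) A k"
proof -
  have A_sub: "A \<subseteq> {..k}" "A \<subseteq> {..<m+k}" and "0 \<in> A" "k \<notin> sumset A A"
    using A assms(2) unfolding A_family_def by auto
  have B_ge: "B \<subseteq> {m+k+1..}"
    using B by auto
  have "2*m + k \<notin> {m+k+1..2*m+k-1}"
    using assms(1) by auto
  with B have "2*m + k \<notin> B" by blast
  show "numerical_semigroup (type_semigroup m k A B)"
    by (rule type_semigroup_numerical_semigroup[OF assms(2) B_ge])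
  show mult: "multiplicity (type_semigroup m k A B) = m"
    by (rule multiplicity_type_semigroup[OF assms(2) \<open>0 \<in> A\<close> B_ge])
  have notin: "2*m + k \<notin> type_semigroup m k A B"
    by (rule type_semigroup_excludes_2m_plus_k[OF assms(1) A_sub(2) \<open>k \<notin> sumset A A\<close> \<open>2*m + k \<notin> B\<close>])
  then have "UNIV - type_semigroup m k A B \<noteq> {}"
    by blast
  then show "has_type (type_semigroup m k A B) A k"
    unfolding has_type_def Let_def mult frobenius_type_semigroup[OF notin]
    using assms(1,2) A type_semigroup_Int_interval[OF assms(2) A_sub(1) B_ge] by auto
qed

lemma has_type_eq_type_semigroup:
  assumes ns: "numerical_semigroup S" and mult: "multiplicity S = m" and type: "has_type S A k"
  shows "S = type_semigroup m k A (S \<inter> {m+k+1..2*m+k-1} - (\<lambda>x. x + 2*m) ` sumset A A)"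
    (is "S = type_semigroup m k A ?B")
proof -
  have add: "\<And>x y. x \<in> S \<Longrightarrow> y \<in> S \<Longrightarrow> x + y \<in> S" and fin: "finite (UNIV - S)"
    using ns unfolding numerical_semigroup_def by auto
  have frob: "frobenius S = 2*m + k" and "UNIV - S \<noteq> {}" and "0 < k"
    and block: "S \<inter> {m..m+k} = (\<lambda>a. a + m) ` A"
    using type mult unfolding has_type_def Let_def by auto
  have "0 \<in> S"
    using ns unfolding numerical_semigroup_def by simp
  have "2*m + k \<notin> S"
    using frobenius_notin[OF fin \<open>UNIV - S \<noteq> {}\<close>] frob by simp
  have above: "x \<in> S" if "2*m + k < x" for x
    using frobenius_less_imp_mem[OF fin] frob that by simp
  have below: "x \<notin> S" if "0 < x" "x < m" for x
    using less_multiplicity_notin[OF that(1)] that(2) mult by simp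
  have shifted_A: "a + m \<in> S" if "a \<in> A" for a
    using block that by auto
  have shifted_AA: "a + b + 2*m \<in> S" if "a \<in> A" "b \<in> A" for a b
  proof -
    have "(a + m) + (b + m) \<in> S"
      using add shifted_A that by blast
    moreover have "(a + m) + (b + m) = a + b + 2*m"
      by simp
    ultimately show ?thesis by simp
  qed
  show ?thesis
  proof (intro equalityI subsetI)
    fix x assume "x \<in> S"
    then have "x \<noteq> 2*m + k" and "\<not> (0 < x \<and> x < m)"
      using below \<open>2*m + k \<notin> S\<close> by blast+
    then consider "x = 0" | "x \<in> {m..m+k}" | "x \<in> {m+k+1..2*m+k-1}" | "2*m + k < x"
      using \<open>0 < k\<close> by fastforce
    then show "x \<in> type_semigroup m k A ?B"
    proof cases
      case 2
      then show ?thesis using block \<open>x \<in> S\<close> unfolding mem_type_semigroup by blast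
    next
      case 3
      show ?thesis
      proof (cases "x \<in> (\<lambda>y. y + 2*m) ` sumset A A")
        case True
        then obtain a b where ab: "a \<in> A" "b \<in> A" "x = a + b + 2*m"
          by (auto simp: mem_sumset)
        with 3 have "a + b \<le> k" by auto
        with ab show ?thesis unfolding mem_type_semigroup by blast
      next
        case False
        with 3 \<open>x \<in> S\<close> show ?thesis unfolding mem_type_semigroup by auto
      qed
    qed (auto simp: mem_type_semigroup)
  next
    fix x assume "x \<in> type_semigroup m k A ?B"
    then show "x \<in> S"
      unfolding mem_type_semigroup
      using \<open>0 \<in> S\<close> shifted_A shifted_AA above by auto
  qed
qed

theorem proposition3p3:
  fixes m k :: nat and A :: "nat set"
  assumes "0 < k" and "k < m" and "A \<in> A_family k"
  shows "{S. numerical_semigroup S \<and> multiplicity S = m \<and> has_type S A k} =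
         {L. \<exists>B. B \<subseteq> {m+k+1..2*m+k-1} - (\<lambda>x. x + 2*m) ` sumset A A \<and>
              L = {0} \<union> (\<lambda>a. a + m) ` A \<union> (\<lambda>x. x + 2*m) ` (sumset A A \<inter> {0..k})
                  \<union> B \<union> {2*m+k+1..}}"
  unfolding type_semigroup_def[symmetric]
proof (intro equalityI subsetI)
  fix S assume "S \<in> {S. numerical_semigroup S \<and> multiplicity S = m \<and> has_type S A k}"
  then have "numerical_semigroup S" "multiplicity S = m" "has_type S A k"
    by simp_all
  note S_eq = has_type_eq_type_semigroup[OF this]
  show "S \<in> {L. \<exists>B. B \<subseteq> {m+k+1..2*m+k-1} - (\<lambda>x. x + 2*m) ` sumset A A \<and>
                       L = type_semigroup m k A B}"
    using S_eq by (intro CollectI exI[of _ "S \<inter> {m+k+1..2*m+k-1} - (\<lambda>x. x + 2*m) ` sumset A A"]) auto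
next
  fix L assume "L \<in> {L. \<exists>B. B \<subseteq> {m+k+1..2*m+k-1} - (\<lambda>x. x + 2*m) ` sumset A A \<and>
                            L = type_semigroup m k A B}"
  then obtain B where "B \<subseteq> {m+k+1..2*m+k-1}" and "L = type_semigroup m k A B"
    by blast
  then show "L \<in> {S. numerical_semigroup S \<and> multiplicity S = m \<and> has_type S A k}"
    using type_semigroup_has_type[OF assms] by simp
qed

end
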